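(* For the stochastic energy exchange model of the context, if $\mu$ is a probability measure on $\mathbb{R}^N_+$ absolutely continuous with respect to Lebesgue measure $\lambda$, then $\mu P^t\ll\lambda$ for every $t>0$.
   Context: Fix $N\ge1$, $T_L,T_R>0$, a sufficiently large $K$ ($K\gg T_L,T_R$) and $R(a,b)=\min\{K,\sqrt{\min(a,b)}\}$. The stochastic energy exchange model is the Markov jump process $\mathbf{E}_t=(E_1(t),\dots,E_N(t))$ on $\mathbb{R}^N_+$: for $i=1,\dots,N-1$ a clock of rate $R(E_i,E_{i+1})$ on sites $i,i+1$; when it rings $(E_i,E_{i+1})\mapsto(p(E_i+E_{i+1}),(1-p)(E_i+E_{i+1}))$, $p$ uniform on $(0,1)$; a clock of rate $R(T_L,E_1)$ (resp. $R(E_N,T_R)$) with $E_1\mapsto p(E_1+X_L)$ (resp. $E_N\mapsto p(E_N+X_R)$), $X_L,X_R$ exponential with means $T_L,T_R$; all independent. $P^t$ is its transition kernel and $(\mu P^t)(B)=\int P^t(\mathbf{E},B)\mu(d\mathbf{E})$. *)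

theory Defs
  imports "HOL-Probability.Probability"
begin

text \<open>States: energies indexed by sites 1..N, represented as functions nat => real
  (extensional on {1..N}). Lebesgue measure on R^N is the product of lborel.\<close>

definition leb_N :: "nat \<Rightarrow> (nat \<Rightarrow> real) measure" where
  "leb_N N = PiM {1..N} (\<lambda>_. lborel)"

definition pos_orthant :: "nat \<Rightarrow> (nat \<Rightarrow> real) set" where
  "pos_orthant N = {E \<in> space (leb_N N). \<forall>i\<in>{1..N}. 0 \<le> E i}"

definition rateR :: "real \<Rightarrow> real \<Rightarrow> real \<Rightarrow> real" where
  "rateR K a b = min K (sqrt (min a b))"

definition total_rate :: "nat \<Rightarrow> real \<Rightarrow> real \<Rightarrow> real \<Rightarrow> (nat \<Rightarrow> real) \<Rightarrow> real" where
  "total_rate N TL TR K E =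
     (\<Sum>i\<in>{1..<N}. rateR K (E i) (E (Suc i))) + rateR K TL (E 1) + rateR K (E N) TR"

text \<open>Uniformization constant: an upper bound (N+1)K for the total jump rate.\<close>
definition unif_const :: "nat \<Rightarrow> real \<Rightarrow> real" where
  "unif_const N K = real (N + 1) * K"

text \<open>One step of the uniformized jump chain, acting on nonnegative functions f:
  (J f)(E) = sum over clocks of (rate/Lambda) * E[f(new state)] + (1 - total rate/Lambda) f(E).
  p is uniform on (0,1); X_L, X_R are exponential with means TL, TR.\<close>
definition jump_op ::
  "nat \<Rightarrow> real \<Rightarrow> real \<Rightarrow> real \<Rightarrow> ((nat \<Rightarrow> real) \<Rightarrow> ennreal) \<Rightarrow> (nat \<Rightarrow> real) \<Rightarrow> ennreal" where
  "jump_op N TL TR K f E =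
     (\<Sum>i\<in>{1..<N}. ennreal (rateR K (E i) (E (Suc i)) / unif_const N K) *
        (\<integral>\<^sup>+ p \<in> {0<..<1}. f (E(i := p * (E i + E (Suc i)),
                                  Suc i := (1 - p) * (E i + E (Suc i)))) \<partial>lborel))
   + ennreal (rateR K TL (E 1) / unif_const N K) *
        (\<integral>\<^sup>+ p \<in> {0<..<1}. (\<integral>\<^sup>+ x. ennreal (exponential_density (1 / TL) x) *
              f (E(1 := p * (E 1 + x))) \<partial>lborel) \<partial>lborel)
   + ennreal (rateR K (E N) TR / unif_const N K) *
        (\<integral>\<^sup>+ p \<in> {0<..<1}. (\<integral>\<^sup>+ x. ennreal (exponential_density (1 / TR) x) *
              f (E(N := p * (E N + x))) \<partial>lborel) \<partial>lborel)
   + ennreal (1 - total_rate N TL TR K E / unif_const N K) * f E"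

text \<open>Transition kernel P^t(E,B) of the Markov jump process (uniformization):
  P^t(E,B) = sum_n e^{-Lambda t} (Lambda t)^n / n! * J^n(E,B).\<close>
definition trans_kernel ::
  "nat \<Rightarrow> real \<Rightarrow> real \<Rightarrow> real \<Rightarrow> real \<Rightarrow> (nat \<Rightarrow> real) \<Rightarrow> (nat \<Rightarrow> real) set \<Rightarrow> ennreal" where
  "trans_kernel N TL TR K t E B =
     (\<Sum>n. ennreal (exp (- unif_const N K * t) * (unif_const N K * t) ^ n / fact n) *
          ((jump_op N TL TR K ^^ n) (indicator B) E))"

definition mu_Pt ::
  "nat \<Rightarrow> real \<Rightarrow> real \<Rightarrow> real \<Rightarrow> (nat \<Rightarrow> real) measure \<Rightarrow> real \<Rightarrow> (nat \<Rightarrow> real) set \<Rightarrow> ennreal" where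
  "mu_Pt N TL TR K \<mu> t B = (\<integral>\<^sup>+ E. trans_kernel N TL TR K t E B \<partial>\<mu>)"

end

theory Submission
  imports Defs
begin

text \<open>Each jump of the uniformized chain either keeps the state or redistributes energy along
  a one-dimensional family: a two-site exchange moves the state along the segment
  \<open>E i + E (Suc i) = const\<close>, and a boundary move replaces one coordinate by a random value with
  a density. By Fubini (Tonelli), a Lebesgue null set meets almost every such line in a
  null set, so the jump operator maps functions vanishing a.e. to functions vanishing a.e.
  Iterating, every term of the uniformization series for \<open>P\<^sup>t(E, B)\<close> vanishes for a.e. \<open>E\<close>
  when \<open>B\<close> is null, and absolute continuity of \<open>\<mu>\<close> transfers this to \<open>\<mu>\<close>-a.e. \<open>E\<close>.\<close>

lemma space_leb_N: "space (leb_N N) = PiE {1..N} (\<lambda>_. UNIV)"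
  by (simp add: leb_N_def space_PiM)

lemma fun_upd_in_space_leb_N:
  "E \<in> space (leb_N N) \<Longrightarrow> j \<in> {1..N} \<Longrightarrow> E(j := x) \<in> space (leb_N N)"
  by (auto simp: space_leb_N PiE_def extensional_def)

lemma measurable_leb_N_fun_upd[measurable (raw)]:
  assumes "j \<in> {1..N}" "g \<in> measurable M (leb_N N)" "h \<in> borel_measurable M"
  shows "(\<lambda>x. (g x)(j := h x)) \<in> measurable M (leb_N N)"
  unfolding leb_N_def
  by (rule measurable_fun_upd[where J="{1..N}"]) (use assms in \<open>auto simp: leb_N_def\<close>)

lemma measurable_leb_N_component[measurable (raw)]:
  assumes "j \<in> {1..N}" "g \<in> measurable M (leb_N N)"
  shows "(\<lambda>x. g x j) \<in> borel_measurable M"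
proof -
  have "(\<lambda>E. E j) \<in> borel_measurable (leb_N N)"
    unfolding leb_N_def using assms(1) by (simp add: measurable_component_singleton)
  from measurable_comp[OF assms(2) this] show ?thesis by (simp add: comp_def)
qed

text \<open>Integrating over all lines parallel to the \<open>j\<close>-th axis counts every point once for
  each value of the discarded coordinate \<open>E j\<close>, whence the factor \<open>\<infinity>\<close>.\<close>

lemma nn_integral_leb_N_lines:
  assumes j: "j \<in> {1..N}" and F[measurable]: "F \<in> borel_measurable (leb_N N)"
  shows "(\<integral>\<^sup>+ E. (\<integral>\<^sup>+ x. F (E(j := x)) \<partial>lborel) \<partial>leb_N N) = \<infinity> * (\<integral>\<^sup>+ E. F E \<partial>leb_N N)"
proof -
  interpret product_sigma_finite "\<lambda>_. lborel" by standard
  define I where "I = {1..N} - {j}"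
  have ins: "{1..N} = insert j I" and fin: "finite I" "j \<notin> I"
    using j by (auto simp: I_def)
  have F': "F \<in> borel_measurable (PiM (insert j I) (\<lambda>_. lborel))"
    using F unfolding leb_N_def ins .
  have "(\<lambda>E. \<integral>\<^sup>+ x. F (E(j := x)) \<partial>lborel) \<in> borel_measurable (leb_N N)"
    using j by measurable
  then have line': "(\<lambda>E. \<integral>\<^sup>+ x. F (E(j := x)) \<partial>lborel) \<in> borel_measurable (PiM (insert j I) (\<lambda>_. lborel))"
    unfolding leb_N_def ins .
  have line_I: "(\<lambda>z. \<integral>\<^sup>+ x. F (z(j := x)) \<partial>lborel) \<in> borel_measurable (PiM I (\<lambda>_. lborel))"
  proof -
    have "(\<lambda>(z, x). F (z(j := x))) \<in> borel_measurable (PiM I (\<lambda>_. lborel) \<Otimes>\<^sub>M lborel)"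
      using measurable_comp[OF measurable_add_dim[of j I "\<lambda>_. lborel"] F']
      by (simp add: comp_def case_prod_beta')
    then show ?thesis by (rule lborel.borel_measurable_nn_integral)
  qed
  have "(\<integral>\<^sup>+ E. (\<integral>\<^sup>+ x. F (E(j := x)) \<partial>lborel) \<partial>leb_N N)
      = (\<integral>\<^sup>+ z. (\<integral>\<^sup>+ (y::real). (\<integral>\<^sup>+ x. F (z(j := x)) \<partial>lborel) \<partial>lborel) \<partial>PiM I (\<lambda>_. lborel))"
    unfolding leb_N_def ins by (subst product_nn_integral_insert[OF fin line']) simp
  also have "\<dots> = (\<integral>\<^sup>+ z. (\<integral>\<^sup>+ x. F (z(j := x)) \<partial>lborel) * \<infinity> \<partial>PiM I (\<lambda>_. lborel))"
    by (simp add: nn_integral_const emeasure_lborel_UNIV)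
  also have "\<dots> = (\<integral>\<^sup>+ z. (\<integral>\<^sup>+ x. F (z(j := x)) \<partial>lborel) \<partial>PiM I (\<lambda>_. lborel)) * \<infinity>"
    by (rule nn_integral_multc[OF line_I])
  also have "(\<integral>\<^sup>+ z. (\<integral>\<^sup>+ x. F (z(j := x)) \<partial>lborel) \<partial>PiM I (\<lambda>_. lborel)) = (\<integral>\<^sup>+ E. F E \<partial>leb_N N)"
    unfolding leb_N_def ins by (subst product_nn_integral_insert[OF fin F']) simp
  finally show ?thesis by (metis mult.commute)
qed

lemma AE_leb_N_line_null:
  assumes j: "j \<in> {1..N}" and A: "A \<in> sets (leb_N N)" "emeasure (leb_N N) A = 0"
  shows "AE E in leb_N N. (\<integral>\<^sup>+ x. indicator A (E(j := x)) \<partial>lborel) = 0"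
proof -
  have "(\<lambda>E. \<integral>\<^sup>+ x. indicator A (E(j := x)) \<partial>lborel) \<in> borel_measurable (leb_N N)"
    using j A by measurable
  moreover have "(\<integral>\<^sup>+ E. (\<integral>\<^sup>+ x. indicator A (E(j := x)) \<partial>lborel) \<partial>leb_N N) = 0"
    using nn_integral_leb_N_lines[OF j, of "indicator A"] A by simp
  ultimately show ?thesis by (simp add: nn_integral_0_iff_AE)
qed

lemma leb_N_null_if_lines_null:
  assumes j: "j \<in> {1..N}" and S: "S \<in> sets (leb_N N)"
    and lines: "\<And>E. E \<in> space (leb_N N) \<Longrightarrow> (\<integral>\<^sup>+ x. indicator S (E(j := x)) \<partial>lborel) = 0"
  shows "emeasure (leb_N N) S = 0"
proof -
  have "(\<integral>\<^sup>+ E. (\<integral>\<^sup>+ x. indicator S (E(j := x)) \<partial>lborel) \<partial>leb_N N) = 0"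
    using lines by (simp add: nn_integral_0_iff_AE AE_I2 cong: nn_integral_cong)
  then have "\<infinity> * emeasure (leb_N N) S = 0"
    using nn_integral_leb_N_lines[OF j, of "indicator S"] S by simp
  then show ?thesis by simp
qed

lemma leb_N_null_hyperplane_sum_zero:
  assumes "i \<in> {1..N}" "i' \<in> {1..N}" "i \<noteq> i'"
  shows "emeasure (leb_N N) {E \<in> space (leb_N N). E i + E i' = 0} = 0"
proof (rule leb_N_null_if_lines_null[OF assms(2)])
  show "{E \<in> space (leb_N N). E i + E i' = 0} \<in> sets (leb_N N)"
    using assms by measurable
  fix E assume E: "E \<in> space (leb_N N)"
  have "(\<integral>\<^sup>+ x. indicator {E \<in> space (leb_N N). E i + E i' = 0} (E(i' := x)) \<partial>lborel)
      = (\<integral>\<^sup>+ x. indicator {- E i} x \<partial>lborel)"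
    using assms fun_upd_in_space_leb_N[OF E assms(2)]
    by (intro nn_integral_cong) (auto simp: indicator_def)
  then show "(\<integral>\<^sup>+ x. indicator {E \<in> space (leb_N N). E i + E i' = 0} (E(i' := x)) \<partial>lborel) = 0"
    by simp
qed

text \<open>The integral is over the segment through \<open>E\<close> that keeps \<open>E i + E i'\<close> fixed. The shear
  \<open>b \<mapsto> E i + b - x\<close> in coordinate \<open>i'\<close> turns the
  integral over all such segments into the plain double integral over coordinates \<open>i, i'\<close>.\<close>

lemma AE_leb_N_exchange_line_null:
  assumes ii': "i \<in> {1..N}" "i' \<in> {1..N}" "i \<noteq> i'"
    and A: "A \<in> sets (leb_N N)" "emeasure (leb_N N) A = 0"
  shows "AE E in leb_N N. (\<integral>\<^sup>+ x. indicator A (E(i := x, i' := E i + E i' - x)) \<partial>lborel) = 0"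
proof -
  define h where "h E = (\<integral>\<^sup>+ x. indicator A (E(i := x, i' := E i + E i' - x)) \<partial>lborel)" for E
  define F1 where "F1 E = (\<integral>\<^sup>+ y. indicator A (E(i' := y)) \<partial>lborel)" for E
  define F2 where "F2 E = (\<integral>\<^sup>+ x. F1 (E(i := x)) \<partial>lborel)" for E
  have h_meas: "h \<in> borel_measurable (leb_N N)" unfolding h_def using ii' A by measurable
  have "F1 \<in> borel_measurable (leb_N N)" unfolding F1_def using ii' A by measurable
  moreover have "integral\<^sup>N (leb_N N) F1 = 0"
    using nn_integral_leb_N_lines[OF ii'(2), of "indicator A"] A unfolding F1_def by simp
  ultimately have F2_zero: "integral\<^sup>N (leb_N N) F2 = 0"
    using nn_integral_leb_N_lines[OF ii'(1)] unfolding F2_def by simp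
  have shear: "(\<integral>\<^sup>+ b. h (E(i' := b)) \<partial>lborel) = F2 E" if E: "E \<in> space (leb_N N)" for E
  proof -
    have const[measurable]: "(\<lambda>_. E) \<in> measurable M (leb_N N)" for M :: "'a measure"
      using E by simp
    have "(\<integral>\<^sup>+ b. h (E(i' := b)) \<partial>lborel)
        = (\<integral>\<^sup>+ b. (\<integral>\<^sup>+ x. indicator A (E(i := x, i' := E i + b - x)) \<partial>lborel) \<partial>lborel)"
      unfolding h_def using ii'
      by (intro nn_integral_cong arg_cong[where f="indicator A"]) (auto simp: fun_eq_iff)
    also have "\<dots> = (\<integral>\<^sup>+ x. (\<integral>\<^sup>+ b. indicator A (E(i := x, i' := E i + b - x)) \<partial>lborel) \<partial>lborel)"
      by (rule lborel_pair.Fubini') (use ii' A in measurable)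
    also have "\<dots> = (\<integral>\<^sup>+ x. (\<integral>\<^sup>+ y. indicator A (E(i := x, i' := y)) \<partial>lborel) \<partial>lborel)"
    proof (rule nn_integral_cong)
      fix x :: real
      have "(\<lambda>y. indicator A (E(i := x, i' := y)) :: ennreal) \<in> borel_measurable borel"
        using ii' A by measurable
      from nn_integral_real_affine[OF this, of 1 "E i - x"]
      show "(\<integral>\<^sup>+ b. indicator A (E(i := x, i' := E i + b - x)) \<partial>lborel)
          = (\<integral>\<^sup>+ y. indicator A (E(i := x, i' := y)) \<partial>lborel)"
        by (simp add: algebra_simps)
    qed
    also have "\<dots> = F2 E"
      unfolding F2_def F1_def by (intro nn_integral_cong arg_cong[where f="indicator A"]) auto
    finally show ?thesis .
  qed
  have "\<infinity> * integral\<^sup>N (leb_N N) h = (\<integral>\<^sup>+ E. (\<integral>\<^sup>+ b. h (E(i' := b)) \<partial>lborel) \<partial>leb_N N)"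
    using nn_integral_leb_N_lines[OF ii'(2) h_meas] by simp
  also have "\<dots> = integral\<^sup>N (leb_N N) F2"
    using shear by (simp cong: nn_integral_cong)
  finally have "integral\<^sup>N (leb_N N) h = 0" using F2_zero by simp
  then show ?thesis using h_meas by (simp add: nn_integral_0_iff_AE h_def)
qed

text \<open>Rescaling the segment by \<open>s = E i + E i'\<close> gives the parametrization by the fraction \<open>p\<close>
  used in the exchange move; this needs \<open>s \<noteq> 0\<close>, which holds off a null hyperplane.\<close>

lemma AE_leb_N_exchange_null:
  assumes ii': "i \<in> {1..N}" "i' \<in> {1..N}" "i \<noteq> i'"
    and A: "A \<in> sets (leb_N N)" "emeasure (leb_N N) A = 0"
  shows "AE E in leb_N N. AE p in lborel. E(i := p * (E i + E i'), i' := (1 - p) * (E i + E i')) \<notin> A"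
proof -
  have "{E \<in> space (leb_N N). E i + E i' = 0} \<in> sets (leb_N N)"
    using ii' by measurable
  then have "AE E in leb_N N. E \<notin> {E \<in> space (leb_N N). E i + E i' = 0}"
    using leb_N_null_hyperplane_sum_zero[OF ii'] by (intro AE_not_in) auto
  with AE_leb_N_exchange_line_null[OF ii' A] AE_space show ?thesis
  proof eventually_elim
    case (elim E)
    define s where "s = E i + E i'"
    have s: "s \<noteq> 0" using elim by (simp add: s_def)
    have const[measurable]: "(\<lambda>_. E) \<in> measurable borel (leb_N N)"
      using elim by simp
    have "(\<lambda>x. indicator A (E(i := x, i' := s - x)) :: ennreal) \<in> borel_measurable borel"
      using ii' A by measurable
    from nn_integral_real_affine[OF this s, of 0] elim s
    have "(\<integral>\<^sup>+ p. indicator A (E(i := s * p, i' := s - s * p)) \<partial>lborel) = 0"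
      by (simp add: s_def)
    moreover have "(\<lambda>p. indicator A (E(i := s * p, i' := s - s * p)) :: ennreal) \<in> borel_measurable lborel"
      using ii' A by (simp add: measurable_lborel1)
    ultimately have "AE p in lborel. (indicator A (E(i := s * p, i' := s - s * p)) :: ennreal) = 0"
      by (simp add: nn_integral_0_iff_AE)
    then show ?case
      by eventually_elim (simp add: s_def indicator_eq_0_iff algebra_simps)
  qed
qed

lemma AE_leb_N_boundary_null:
  assumes j: "j \<in> {1..N}" and A: "A \<in> sets (leb_N N)" "emeasure (leb_N N) A = 0"
  shows "AE E in leb_N N. \<forall>p::real. p \<noteq> 0 \<longrightarrow> (AE x in lborel. E(j := p * (E j + x)) \<notin> A)"
  using AE_leb_N_line_null[OF j A] AE_space
proof eventually_elim
  case (elim E)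
  show ?case
  proof (intro allI impI)
    fix p :: real assume p: "p \<noteq> 0"
    have const[measurable]: "(\<lambda>_. E) \<in> measurable borel (leb_N N)"
      using elim by simp
    have "(\<lambda>y. indicator A (E(j := y)) :: ennreal) \<in> borel_measurable borel"
      using j A by measurable
    from nn_integral_real_affine[OF this p, of "p * E j"] elim p
    have "(\<integral>\<^sup>+ x. indicator A (E(j := p * E j + p * x)) \<partial>lborel) = 0"
      by simp
    moreover have "(\<lambda>x. indicator A (E(j := p * E j + p * x)) :: ennreal) \<in> borel_measurable lborel"
      using j A by (simp add: measurable_lborel1)
    ultimately have "AE x in lborel. (indicator A (E(j := p * E j + p * x)) :: ennreal) = 0"
      by (simp add: nn_integral_0_iff_AE)
    then show "AE x in lborel. E(j := p * (E j + x)) \<notin> A"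
      by eventually_elim (simp add: indicator_eq_0_iff distrib_left)
  qed
qed

lemma nn_integral_unit_interval_zero:
  assumes "\<And>p. 0 < p \<Longrightarrow> p < 1 \<Longrightarrow> g p = 0"
  shows "(\<integral>\<^sup>+ p \<in> {0<..<1}. g p \<partial>lborel) = 0"
  using assms by (subst nn_integral_cong[where v="\<lambda>_. 0"]) (auto simp: indicator_def)

lemma jump_op_AE_zero:
  assumes N: "1 \<le> N" and f: "AE E in leb_N N. f E = 0"
  shows "AE E in leb_N N. jump_op N TL TR K f E = 0"
proof -
  from f obtain A where A: "{E \<in> space (leb_N N). f E \<noteq> 0} \<subseteq> A" "emeasure (leb_N N) A = 0"
      "A \<in> sets (leb_N N)" by (rule AE_E)
  have f_zero: "f E = 0" if "E \<in> space (leb_N N)" "E \<notin> A" for E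
    using A(1) that by auto
  have exchange: "AE E in leb_N N. \<forall>i\<in>{1..<N}. AE p in lborel.
      E(i := p * (E i + E (Suc i)), Suc i := (1 - p) * (E i + E (Suc i))) \<notin> A"
    by (intro AE_finite_allI) (auto intro: AE_leb_N_exchange_null A(2,3))
  have left: "AE E in leb_N N. \<forall>p::real. p \<noteq> 0 \<longrightarrow> (AE x in lborel. E(1 := p * (E 1 + x)) \<notin> A)"
    using AE_leb_N_boundary_null[of 1 N A] N A by auto
  have right: "AE E in leb_N N. \<forall>p::real. p \<noteq> 0 \<longrightarrow> (AE x in lborel. E(N := p * (E N + x)) \<notin> A)"
    using AE_leb_N_boundary_null[of N N A] N A by auto
  have "AE E in leb_N N. E \<notin> A" using A by (intro AE_not_in) auto
  with exchange left right AE_space show ?thesis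
  proof eventually_elim
    case (elim E)
    have exchange_term: "(\<integral>\<^sup>+ p \<in> {0<..<1}. f (E(i := p * (E i + E (Suc i)),
        Suc i := (1 - p) * (E i + E (Suc i)))) \<partial>lborel) = 0" if i: "i \<in> {1..<N}" for i
    proof -
      have "AE p in lborel. E(i := p * (E i + E (Suc i)),
          Suc i := (1 - p) * (E i + E (Suc i))) \<notin> A"
        using elim i by auto
      then have "AE p in lborel. f (E(i := p * (E i + E (Suc i)),
          Suc i := (1 - p) * (E i + E (Suc i)))) * indicator {0<..<1} p = 0"
        by eventually_elim (use elim i in \<open>simp add: f_zero fun_upd_in_space_leb_N\<close>)
      from nn_integral_cong_AE[OF this] show ?thesis by simp
    qed
    have boundary_term: "(\<integral>\<^sup>+ p \<in> {0<..<1}. (\<integral>\<^sup>+ x. ennreal (exponential_density (1 / T) x) *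
        f (E(j := p * (E j + x))) \<partial>lborel) \<partial>lborel) = 0"
      if j: "j \<in> {1..N}" and
        line: "\<forall>p::real. p \<noteq> 0 \<longrightarrow> (AE x in lborel. E(j := p * (E j + x)) \<notin> A)" for j T
    proof (rule nn_integral_unit_interval_zero)
      fix p :: real assume "0 < p"
      with line have "AE x in lborel. E(j := p * (E j + x)) \<notin> A" by auto
      then have "AE x in lborel. ennreal (exponential_density (1 / T) x) *
          f (E(j := p * (E j + x))) = 0"
        by eventually_elim (use elim j in \<open>simp add: f_zero fun_upd_in_space_leb_N\<close>)
      from nn_integral_cong_AE[OF this] show "(\<integral>\<^sup>+ x. ennreal (exponential_density (1 / T) x) *
          f (E(j := p * (E j + x))) \<partial>lborel) = 0"
        by simp
    qed
    show ?case
      unfolding jump_op_def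
      using exchange_term boundary_term[of 1] boundary_term[of N] f_zero elim N by simp
  qed
qed

lemma jump_op_power_AE_zero:
  assumes N: "1 \<le> N" and B: "B \<in> sets (leb_N N)" "emeasure (leb_N N) B = 0"
  shows "AE E in leb_N N. \<forall>n. (jump_op N TL TR K ^^ n) (indicator B) E = 0"
  unfolding AE_all_countable
proof
  fix n show "AE E in leb_N N. (jump_op N TL TR K ^^ n) (indicator B) E = 0"
  proof (induction n)
    case 0
    have "AE E in leb_N N. E \<notin> B" using B by (intro AE_not_in) auto
    then show ?case by eventually_elim simp
  next
    case (Suc n)
    then show ?case using jump_op_AE_zero[OF N Suc] by simp
  qed
qed

theorem lemma6p5:
  fixes N :: nat and TL TR K t :: real and \<mu> :: "(nat \<Rightarrow> real) measure"
  assumes "N \<ge> 1" and "TL > 0" and "TR > 0" and "K > 0"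
    and "prob_space \<mu>" and "sets \<mu> = sets (leb_N N)"
    and "emeasure \<mu> (space (leb_N N) - pos_orthant N) = 0"
    and "absolutely_continuous (leb_N N) \<mu>"
    and "t > 0"
  shows "\<forall>B \<in> sets (leb_N N). emeasure (leb_N N) B = 0 \<longrightarrow> mu_Pt N TL TR K \<mu> t B = 0"
proof (intro ballI impI)
  fix B assume B: "B \<in> sets (leb_N N)" "emeasure (leb_N N) B = 0"
  \<comment> \<open>Every term of the series vanishes a.e..\<close>
  have "AE E in \<mu>. \<forall>n. (jump_op N TL TR K ^^ n) (indicator B) E = 0"
    using absolutely_continuous_AE[OF assms(6,8) jump_op_power_AE_zero[OF assms(1) B]] .
  then have "AE E in \<mu>. trans_kernel N TL TR K t E B = 0"
    by eventually_elim (simp add: trans_kernel_def)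
  then show "mu_Pt N TL TR K \<mu> t B = 0"
    unfolding mu_Pt_def by (simp add: nn_integral_cong_AE)
qed

end
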